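(* Let $D$ be a unital commutative C*-algebra and let $\Delta\subseteq \mathrm{T}(D)$ be a closed convex set of tracial states whose set of extreme points $\partial\Delta$ is compact. Assume that for each $n\in\mathbb N$ there is a partition of unity $p_1,\dots,p_n\in\ell^\infty(D)/J_{2,\omega,\Delta}$ such that $\tau(p_i)=\frac1n$ for all $\tau\in\Delta_\omega$ and $i=1,\dots,n$, and such that $\Delta$ is ample with respect to each $p_i$, $i=1,\dots,n$. Then such a partition of unity satisfies $\tau(p_iap_i)=\frac1n\tau(a)$ for all $a\in D$, $\tau\in\Delta_\omega$, $i=1,\dots,n$. In particular, $(D,\Delta)$ is approximately divisible.
   Context: $\omega$ is a free ultrafilter on $\mathbb N$. $J_{2,\omega,\Delta}=\{(f_n)\in\ell^\infty(D):\lim_{n\to\omega}\sup_{\tau\in\Delta}\tau(|f_n|^2)=0\}$. $\Delta_\omega$ is the set of traces on $\ell^\infty(D)$ of the form $\tau((a_i))=\lim_{i\to\omega}\tau_i(a_i)$ with $\tau_i\in\Delta$; they vanish on $J_{2,\omega,\Delta}$ and are regarded as traces on the quotient. For a sequence $(\tau_n)$ in $\Delta$ write $(\tau_n)_\omega$ for this limit trace. Elements of $D$ are regarded as constant sequences. A partition of unity means mutually orthogonal projections summing to $1$. For a nonzero positive contraction $c=\overline{(c_n)}\in\ell^\infty(D)/J_{2,\omega,\Delta}$, $\Delta$ is ample with respect to $c$ if for every sequence $(\tau_n)$ in $\Delta$ the functionals $x\mapsto (\tau_n)_\omega(xc)/(\tau_n)_\omega(c)$ and $x\mapsto (\tau_n)_\omega(x(1-c))/(1-(\tau_n)_\omega(c))$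 on $D$ belong to $\Delta$ (when $(\tau_n)_\omega(c)=0$, only the second is required; when it equals $1$, only the first). $(D,\Delta)$ is approximately divisible if there is $K>0$ such that for each $n$ there is a partition of unity $p_1,\dots,p_n\in\ell^\infty(D)/J_{2,\omega,\Delta}$ with $\tau(p_iap_i)\le\frac Kn\tau(a)$ for all $a\in D^+$, $\tau\in\Delta_\omega$, $i=1,\dots,n$. *)

theory Defs
  imports "HOL-Analysis.Analysis"
begin

text \<open>Model: a unital commutative C*-algebra D is (by Gelfand duality) C(X) for a
compact Hausdorff space X; here X is a type 'a with t2 topology and compact UNIV,
and D = CX = continuous complex functions on X. Functionals on D are functions
(('a => complex) => complex) that vanish outside CX (extensional); the weak*
topology is then the product topology on the function type.\<close>

definition CX :: "('a::topological_space \<Rightarrow> complex) set" where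
  "CX = {f. continuous_on UNIV f}"

definition cmul :: "('a \<Rightarrow> complex) \<Rightarrow> ('a \<Rightarrow> complex) \<Rightarrow> ('a \<Rightarrow> complex)" where
  "cmul f g = (\<lambda>x. f x * g x)"

definition positive_el :: "('a::topological_space \<Rightarrow> complex) \<Rightarrow> bool" where
  "positive_el f \<longleftrightarrow> f \<in> CX \<and> (\<forall>x. Im (f x) = 0 \<and> Re (f x) \<ge> 0)"

definition tracial_state :: "(('a::topological_space \<Rightarrow> complex) \<Rightarrow> complex) \<Rightarrow> bool" where
  "tracial_state \<tau> \<longleftrightarrow>
     (\<forall>f. f \<notin> CX \<longrightarrow> \<tau> f = 0) \<and>
     (\<forall>f\<in>CX. \<forall>g\<in>CX. \<tau> (\<lambda>x. f x + g x) = \<tau> f + \<tau> g) \<and>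
     (\<forall>f\<in>CX. \<forall>c. \<tau> (\<lambda>x. c * f x) = c * \<tau> f) \<and>
     (\<forall>f. positive_el f \<longrightarrow> Im (\<tau> f) = 0 \<and> Re (\<tau> f) \<ge> 0) \<and>
     (\<forall>f\<in>CX. \<forall>g\<in>CX. \<tau> (cmul f g) = \<tau> (cmul g f)) \<and>
     \<tau> (\<lambda>x. 1) = 1"

definition convex_fset :: "(('a \<Rightarrow> complex) \<Rightarrow> complex) set \<Rightarrow> bool" where
  "convex_fset S \<longleftrightarrow> (\<forall>\<sigma>\<in>S. \<forall>\<rho>\<in>S. \<forall>t::real. 0 \<le> t \<and> t \<le> 1 \<longrightarrow>
      (\<lambda>f. complex_of_real t * \<sigma> f + complex_of_real (1 - t) * \<rho> f) \<in> S)"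

definition extreme_fpoints :: "(('a \<Rightarrow> complex) \<Rightarrow> complex) set \<Rightarrow> (('a \<Rightarrow> complex) \<Rightarrow> complex) set" where
  "extreme_fpoints S = {\<tau>\<in>S. \<forall>\<sigma>\<in>S. \<forall>\<rho>\<in>S. \<forall>t::real. 0 < t \<and> t < 1 \<and>
      \<tau> = (\<lambda>f. complex_of_real t * \<sigma> f + complex_of_real (1 - t) * \<rho> f) \<longrightarrow> \<sigma> = \<rho>}"

definition free_ultrafilter :: "nat filter \<Rightarrow> bool" where
  "free_ultrafilter \<omega> \<longleftrightarrow> \<omega> \<noteq> bot \<and> (\<forall>P. eventually P \<omega> \<or> eventually (\<lambda>n. \<not> P n) \<omega>)
      \<and> \<omega> \<le> cofinite"

definition linf :: "(nat \<Rightarrow> 'a::topological_space \<Rightarrow> complex) set" where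
  "linf = {s. (\<forall>k. s k \<in> CX) \<and> (\<exists>B. \<forall>k x. cmod (s k x) \<le> B)}"

definition J2 :: "nat filter \<Rightarrow> (('a::topological_space \<Rightarrow> complex) \<Rightarrow> complex) set
                  \<Rightarrow> (nat \<Rightarrow> 'a \<Rightarrow> complex) set" where
  "J2 \<omega> \<Delta> = {s\<in>linf. ((\<lambda>k. SUP \<tau>\<in>\<Delta>. Re (\<tau> (\<lambda>x. complex_of_real ((cmod (s k x))\<^sup>2)))) \<longlongrightarrow> 0) \<omega>}"

text \<open>Equality in the quotient ell^infty(D)/J (on representatives).\<close>
definition qeq :: "nat filter \<Rightarrow> (('a::topological_space \<Rightarrow> complex) \<Rightarrow> complex) set
                  \<Rightarrow> (nat \<Rightarrow> 'a \<Rightarrow> complex) \<Rightarrow> (nat \<Rightarrow> 'a \<Rightarrow> complex) \<Rightarrow> bool" where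
  "qeq \<omega> \<Delta> s t \<longleftrightarrow> (\<lambda>k x. s k x - t k x) \<in> J2 \<omega> \<Delta>"

definition smul :: "(nat \<Rightarrow> 'a \<Rightarrow> complex) \<Rightarrow> (nat \<Rightarrow> 'a \<Rightarrow> complex) \<Rightarrow> (nat \<Rightarrow> 'a \<Rightarrow> complex)" where
  "smul s t = (\<lambda>k. cmul (s k) (t k))"

definition omega_trace :: "nat filter \<Rightarrow> (nat \<Rightarrow> ('a \<Rightarrow> complex) \<Rightarrow> complex)
                          \<Rightarrow> (nat \<Rightarrow> 'a \<Rightarrow> complex) \<Rightarrow> complex" where
  "omega_trace \<omega> \<tau>s s = Lim \<omega> (\<lambda>k. \<tau>s k (s k))"

definition const_seq :: "('a \<Rightarrow> complex) \<Rightarrow> (nat \<Rightarrow> 'a \<Rightarrow> complex)" where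
  "const_seq a = (\<lambda>k. a)"

text \<open>p_1..p_n (indexed 0..n-1) is a partition of unity of projections in ell^infty(D)/J.\<close>
definition partition_of_unity :: "nat filter \<Rightarrow> (('a::topological_space \<Rightarrow> complex) \<Rightarrow> complex) set
     \<Rightarrow> nat \<Rightarrow> (nat \<Rightarrow> nat \<Rightarrow> 'a \<Rightarrow> complex) \<Rightarrow> bool" where
  "partition_of_unity \<omega> \<Delta> n p \<longleftrightarrow>
     (\<forall>i<n. p i \<in> linf) \<and>
     (\<forall>i<n. qeq \<omega> \<Delta> (smul (p i) (p i)) (p i)) \<and>
     (\<forall>i<n. qeq \<omega> \<Delta> (\<lambda>k x. cnj (p i k x)) (p i)) \<and>
     (\<forall>i<n. \<forall>j<n. i \<noteq> j \<longrightarrow> qeq \<omega> \<Delta> (smul (p i) (p j)) (\<lambda>k x. 0)) \<and>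
     qeq \<omega> \<Delta> (\<lambda>k x. \<Sum>i<n. p i k x) (\<lambda>k x. 1)"

definition ample :: "nat filter \<Rightarrow> (('a::topological_space \<Rightarrow> complex) \<Rightarrow> complex) set
     \<Rightarrow> (nat \<Rightarrow> 'a \<Rightarrow> complex) \<Rightarrow> bool" where
  "ample \<omega> \<Delta> c \<longleftrightarrow> (\<forall>\<tau>s. (\<forall>k. \<tau>s k \<in> \<Delta>) \<longrightarrow>
     (let t = omega_trace \<omega> \<tau>s c in
       (t \<noteq> 0 \<longrightarrow> (\<lambda>x. if x \<in> CX then omega_trace \<omega> \<tau>s (smul (const_seq x) c) / t else 0) \<in> \<Delta>) \<and>
       (t \<noteq> 1 \<longrightarrow> (\<lambda>x. if x \<in> CX then
            omega_trace \<omega> \<tau>s (smul (const_seq x) (\<lambda>k y. 1 - c k y)) / (1 - t) else 0) \<in> \<Delta>)))"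

definition approx_divisible :: "nat filter \<Rightarrow> (('a::topological_space \<Rightarrow> complex) \<Rightarrow> complex) set \<Rightarrow> bool" where
  "approx_divisible \<omega> \<Delta> \<longleftrightarrow> (\<exists>K::real. K > 0 \<and> (\<forall>n::nat. n \<ge> 1 \<longrightarrow>
     (\<exists>p. partition_of_unity \<omega> \<Delta> n p \<and>
        (\<forall>a \<tau>s i. positive_el a \<and> (\<forall>k. \<tau>s k \<in> \<Delta>) \<and> i < n \<longrightarrow>
           Re (omega_trace \<omega> \<tau>s (smul (smul (p i) (const_seq a)) (p i)))
             \<le> K / real n * Re (omega_trace \<omega> \<tau>s (const_seq a))))))"

end

theory Submission
  imports Defs
begin

text \<open>
  Fix \<open>p = p\<^sub>i\<close> and \<open>a\<close>. Since \<open>p\<^sup>2 = p\<close> modulo \<open>J\<^sub>2\<close> and traces are \<open>\<parallel>\<cdot>\<parallel>\<^sub>2\<close>-continuous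
  (Cauchy--Schwarz), \<open>\<tau>(p a p) = \<tau>(a p)\<close>, so it suffices that \<open>\<tau>\<^sub>k(a p\<^sub>k) - \<tau>\<^sub>k(a)/n \<rightarrow> 0\<close>
  along \<open>\<omega>\<close> for every sequence \<open>\<tau>\<^sub>k\<close> in \<open>\<Delta>\<close>. The functional \<open>\<sigma> \<mapsto> \<sigma>(a p\<^sub>k) - \<sigma>(a)/n\<close> is
  affine and weak*-continuous on the compact set \<open>\<Delta>\<close>, so by Bauer's maximum principle its
  modulus is dominated at an extreme point: it suffices to treat sequences \<open>e\<^sub>k\<close> of extreme
  traces. As \<open>\<partial>\<Delta>\<close> is compact, \<open>e\<^sub>k\<close> converges along \<open>\<omega>\<close> to an extreme trace \<open>e\<close>.
  Ampleness writes \<open>e = (1/n) \<sigma>\<^sub>1 + (1 - 1/n) \<sigma>\<^sub>2\<close> with \<open>\<sigma>\<^sub>1 = n (e\<^sub>k)\<^sub>\<omega>(\<cdot> p)\<close> and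
  \<open>\<sigma>\<^sub>2\<close> in \<open>\<Delta>\<close>; extremality forces \<open>\<sigma>\<^sub>1 = e\<close>, i.e. \<open>(e\<^sub>k)\<^sub>\<omega>(a p) = e(a)/n\<close>.
  Approximate divisibility then holds with \<open>K = 1\<close>.
\<close>

section \<open>Traces on \<open>C(X)\<close>\<close>

lemma CX_iff: "f \<in> CX \<longleftrightarrow> continuous_on UNIV f"
  by (simp add: CX_def)

lemma CX_of_real: "continuous_on UNIV u \<Longrightarrow> (\<lambda>x. complex_of_real (u x)) \<in> CX"
  by (simp add: CX_iff continuous_on_of_real)

lemma CX_cmul: "f \<in> CX \<Longrightarrow> g \<in> CX \<Longrightarrow> cmul f g \<in> CX"
  by (auto simp: CX_iff cmul_def intro!: continuous_intros)

lemma CX_bounded: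
  assumes "compact (UNIV :: 'a::topological_space set)" and "f \<in> CX"
  shows "\<exists>B. \<forall>x::'a. cmod (f x) \<le> B"
proof -
  have "compact (range f)"
    using assms by (intro compact_continuous_image) (auto simp: CX_iff)
  then show ?thesis
    by (auto dest: compact_imp_bounded simp: bounded_iff)
qed

context
  fixes \<tau> :: "('a::topological_space \<Rightarrow> complex) \<Rightarrow> complex"
  assumes \<tau>: "tracial_state \<tau>"
begin

lemma tracial_state_outside: "f \<notin> CX \<Longrightarrow> \<tau> f = 0"
  using \<tau> by (simp add: tracial_state_def)

lemma tracial_state_add: "f \<in> CX \<Longrightarrow> g \<in> CX \<Longrightarrow> \<tau> (\<lambda>x. f x + g x) = \<tau> f + \<tau> g"
  using \<tau> by (simp add: tracial_state_def)

lemma tracial_state_scale: "f \<in> CX \<Longrightarrow> \<tau> (\<lambda>x. c * f x) = c * \<tau> f"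
  using \<tau> by (simp add: tracial_state_def)

lemma tracial_state_nonneg: "positive_el f \<Longrightarrow> Im (\<tau> f) = 0 \<and> Re (\<tau> f) \<ge> 0"
  using \<tau> by (simp add: tracial_state_def)

lemma tracial_state_const: "\<tau> (\<lambda>x. c) = c"
  using tracial_state_scale[of "\<lambda>x. 1" c] \<tau> by (simp add: CX_iff tracial_state_def)

lemma tracial_state_diff: "f \<in> CX \<Longrightarrow> g \<in> CX \<Longrightarrow> \<tau> (\<lambda>x. f x - g x) = \<tau> f - \<tau> g"
  using tracial_state_add[of f "\<lambda>x. (-1) * g x"] tracial_state_scale[of g "-1"]
  by (simp add: CX_iff continuous_intros)

lemma tracial_state_of_real_nonneg:
  "continuous_on UNIV u \<Longrightarrow> (\<And>x. u x \<ge> 0) \<Longrightarrow>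
     Im (\<tau> (\<lambda>x. complex_of_real (u x))) = 0 \<and> Re (\<tau> (\<lambda>x. complex_of_real (u x))) \<ge> 0"
  by (rule tracial_state_nonneg) (simp add: positive_el_def CX_of_real)

lemma tracial_state_of_real:
  assumes u: "continuous_on UNIV u"
  shows "Im (\<tau> (\<lambda>x. complex_of_real (u x))) = 0"
proof -
  let ?pos = "\<lambda>x. complex_of_real (max (u x) 0)" and ?neg = "\<lambda>x. complex_of_real (max (- u x) 0)"
  have "(\<lambda>x. complex_of_real (u x)) = (\<lambda>x. ?pos x - ?neg x)"
    by (auto simp: max_def)
  moreover have "?pos \<in> CX" "?neg \<in> CX"
    using u by (auto intro!: CX_of_real continuous_intros)
  ultimately have "\<tau> (\<lambda>x. complex_of_real (u x)) = \<tau> ?pos - \<tau> ?neg"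
    by (simp add: tracial_state_diff)
  moreover have "Im (\<tau> ?pos) = 0" "Im (\<tau> ?neg) = 0"
    using u by (auto intro!: tracial_state_of_real_nonneg[THEN conjunct1] continuous_intros)
  ultimately show ?thesis
    by simp
qed

lemma tracial_state_mono:
  assumes "continuous_on UNIV r" "continuous_on UNIV s" and "\<And>x. r x \<le> s x"
  shows "Re (\<tau> (\<lambda>x. complex_of_real (r x))) \<le> Re (\<tau> (\<lambda>x. complex_of_real (s x)))"
proof -
  have "\<tau> (\<lambda>x. complex_of_real (s x - r x))
      = \<tau> (\<lambda>x. complex_of_real (s x)) - \<tau> (\<lambda>x. complex_of_real (r x))"
    using tracial_state_diff[OF CX_of_real CX_of_real, OF assms(2,1)] by simp
  moreover have "Re (\<tau> (\<lambda>x. complex_of_real (s x - r x))) \<ge> 0"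
    using assms by (intro tracial_state_of_real_nonneg[THEN conjunct2] continuous_intros) auto
  ultimately show ?thesis
    by simp
qed

lemma tracial_state_cnj:
  assumes f: "f \<in> CX"
  shows "\<tau> (\<lambda>x. cnj (f x)) = cnj (\<tau> f)"
proof -
  let ?re = "\<lambda>x. complex_of_real (Re (f x))" and ?im = "\<lambda>x. complex_of_real (Im (f x))"
  have cf: "continuous_on UNIV f"
    using f by (simp add: CX_iff)
  have parts: "?re \<in> CX" "?im \<in> CX" "(\<lambda>x. c * ?im x) \<in> CX" for c
    using cf by (auto simp: CX_iff intro!: continuous_intros)
  have split: "\<tau> (\<lambda>x. ?re x + c * ?im x) = \<tau> ?re + c * \<tau> ?im" for c
    using parts by (simp add: tracial_state_add tracial_state_scale)
  have real: "Im (\<tau> ?re) = 0" "Im (\<tau> ?im) = 0"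
    using cf by (auto intro!: tracial_state_of_real continuous_intros)
  have "f = (\<lambda>x. ?re x + \<i> * ?im x)" "(\<lambda>x. cnj (f x)) = (\<lambda>x. ?re x + (- \<i>) * ?im x)"
    by (auto simp: complex_eq_iff)
  then show ?thesis
    using split[of \<i>] split[of "- \<i>"] real by (simp add: complex_eq_iff)
qed

text \<open>Cauchy--Schwarz: expand \<open>0 \<le> \<tau> (\<bar>g - \<tau> g\<bar>\<^sup>2)\<close>.\<close>
lemma tracial_state_norm_sq_le:
  assumes g: "g \<in> CX"
  shows "(cmod (\<tau> g))\<^sup>2 \<le> Re (\<tau> (\<lambda>x. complex_of_real ((cmod (g x))\<^sup>2)))"
proof -
  define c where "c = \<tau> g"
  define G where "G x = complex_of_real ((cmod (g x))\<^sup>2)" for x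
  define H where "H x = complex_of_real ((cmod (g x - c))\<^sup>2)" for x
  have cg: "continuous_on UNIV g"
    using g by (simp add: CX_iff)
  have GH: "continuous_on UNIV G" "continuous_on UNIV H"
    unfolding G_def H_def using cg by (auto intro!: continuous_intros)
  have norm_sq: "complex_of_real ((cmod z)\<^sup>2) = z * cnj z" for z
    by (metis complex_norm_square of_real_power)
  have "(\<lambda>x. H x + (cnj c * g x + c * cnj (g x))) = (\<lambda>x. G x + c * cnj c)"
    by (simp only: G_def H_def norm_sq) (auto simp: fun_eq_iff algebra_simps)
  from arg_cong[OF this, of \<tau>]
  have "\<tau> H + (cnj c * \<tau> g + c * cnj (\<tau> g)) = \<tau> G + c * cnj c"
    using cg GH g by (simp add: tracial_state_add tracial_state_scale tracial_state_const
        tracial_state_cnj CX_iff continuous_intros)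
  then have "Re (\<tau> G) - (cmod c)\<^sup>2 = Re (\<tau> H)"
    using cmod_power2[of c] by (simp add: c_def complex_eq_iff power2_eq_square algebra_simps)
  also have "\<dots> \<ge> 0"
    unfolding H_def using cg by (intro tracial_state_of_real_nonneg[THEN conjunct2] continuous_intros) auto
  finally show ?thesis
    by (simp add: c_def G_def[abs_def])
qed

lemma tracial_state_norm_le:
  assumes g: "g \<in> CX" and bound: "\<And>x. cmod (g x) \<le> B"
  shows "cmod (\<tau> g) \<le> B"
proof -
  have B: "0 \<le> B"
    using bound[of undefined] norm_ge_zero order_trans by blast
  have "(cmod (\<tau> g))\<^sup>2 \<le> Re (\<tau> (\<lambda>x. complex_of_real ((cmod (g x))\<^sup>2)))"
    using g by (rule tracial_state_norm_sq_le)
  also have "\<dots> \<le> Re (\<tau> (\<lambda>x. complex_of_real (B\<^sup>2)))"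
    using g bound by (intro tracial_state_mono) (auto simp: CX_iff intro!: continuous_intros power_mono)
  finally show ?thesis
    using B by (simp add: tracial_state_const power2_le_iff_abs_le)
qed

end

lemma tracial_states_compact:
  fixes \<Delta> :: "(('a::topological_space \<Rightarrow> complex) \<Rightarrow> complex) set"
  assumes compact: "compact (UNIV :: 'a set)" and tr: "\<forall>\<tau>\<in>\<Delta>. tracial_state \<tau>" and "closed \<Delta>"
  shows "compact \<Delta>"
proof -
  define bound where "bound f = (if f \<in> CX then SOME B. \<forall>x. cmod (f x) \<le> B else 0)"
    for f :: "'a \<Rightarrow> complex"
  define P where "P = PiE UNIV (\<lambda>f. cball (0::complex) (bound f))"
  have "compactin (product_topology (\<lambda>_. euclidean) UNIV) P"
    unfolding P_def compactin_PiE by simp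
  then have "compact P"
    by (simp add: euclidean_product_topology)
  moreover have "\<Delta> \<subseteq> P"
  proof
    fix \<tau> assume "\<tau> \<in> \<Delta>"
    then have \<tau>: "tracial_state \<tau>"
      using tr by blast
    have "cmod (\<tau> f) \<le> bound f" for f
    proof (cases "f \<in> CX")
      case True
      then have "\<forall>x. cmod (f x) \<le> bound f"
        using CX_bounded[OF compact] by (simp add: bound_def) (rule someI_ex)
      then show ?thesis
        using tracial_state_norm_le[OF \<tau> True] by blast
    next
      case False
      then show ?thesis
        by (simp add: tracial_state_outside[OF \<tau>] bound_def)
    qed
    then show "\<tau> \<in> P"
      by (simp add: P_def PiE_iff)
  qed
  ultimately show ?thesis
    using \<open>closed \<Delta>\<close> compact_Int_closed by (metis inf.absorb_iff2)
qed

section \<open>Limits along \<open>\<omega>\<close> and the trace-kernel ideal\<close>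

lemma free_ultrafilter_nontrivial: "free_ultrafilter \<omega> \<Longrightarrow> \<omega> \<noteq> bot"
  by (simp add: free_ultrafilter_def)

text \<open>Along an ultrafilter every cluster point is a limit, and compactness supplies a cluster point.\<close>
lemma free_ultrafilter_compact_tendsto:
  fixes f :: "nat \<Rightarrow> 'b::topological_space"
  assumes u: "free_ultrafilter \<omega>" and K: "compact K" and f: "\<And>k. f k \<in> K"
  shows "\<exists>l\<in>K. (f \<longlongrightarrow> l) \<omega>"
proof -
  have ultra: "eventually P \<omega> \<or> eventually (\<lambda>n. \<not> P n) \<omega>" for P
    using u by (simp add: free_ultrafilter_def)
  have "filtermap f \<omega> \<noteq> bot"
    using free_ultrafilter_nontrivial[OF u] by (simp add: filtermap_bot_iff)
  moreover have "eventually (\<lambda>x. x \<in> K) (filtermap f \<omega>)"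
    using f by (simp add: eventually_filtermap)
  ultimately obtain l where l: "l \<in> K" and cluster: "inf (nhds l) (filtermap f \<omega>) \<noteq> bot"
    using K unfolding compact_filter by blast
  have "eventually (\<lambda>k. f k \<in> S) \<omega>" if S: "open S" "l \<in> S" for S
  proof (rule ccontr)
    assume "\<not> eventually (\<lambda>k. f k \<in> S) \<omega>"
    then have "eventually (\<lambda>y. y \<notin> S) (filtermap f \<omega>)"
      using ultra[of "\<lambda>k. f k \<in> S"] by (simp add: eventually_filtermap)
    moreover have "eventually (\<lambda>y. y \<in> S) (nhds l)"
      using S by (rule eventually_nhds_in_open)
    ultimately have "eventually (\<lambda>y. False) (inf (nhds l) (filtermap f \<omega>))"
      unfolding eventually_inf by blast
    with cluster show False
      by (simp add: eventually_False)
  qed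
  with l show ?thesis
    by (auto simp: tendsto_def)
qed

lemma free_ultrafilter_bounded_tendsto_Lim:
  fixes z :: "nat \<Rightarrow> complex"
  assumes u: "free_ultrafilter \<omega>" and bound: "\<And>k. cmod (z k) \<le> B"
  shows "(z \<longlongrightarrow> Lim \<omega> z) \<omega>"
proof -
  obtain l where "(z \<longlongrightarrow> l) \<omega>"
    using free_ultrafilter_compact_tendsto[OF u compact_cball, of z 0 B] bound by auto
  then show ?thesis
    using tendsto_Lim free_ultrafilter_nontrivial[OF u] by (metis trivial_limit_def)
qed

lemma linf_CX: "s \<in> linf \<Longrightarrow> s k \<in> CX"
  by (simp add: linf_def)

lemma linf_bounded: "s \<in> linf \<Longrightarrow> \<exists>B. \<forall>k x. cmod (s k x) \<le> B"
  by (simp add: linf_def)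

lemma linf_smul:
  assumes "s \<in> linf" "t \<in> linf"
  shows "smul s t \<in> linf"
proof -
  obtain B C where B: "\<And>k x. cmod (s k x) \<le> B" and C: "\<And>k x. cmod (t k x) \<le> C"
    using linf_bounded[OF assms(1)] linf_bounded[OF assms(2)] by blast
  have "cmod (s k x * t k x) \<le> B * C" for k x
    unfolding norm_mult using B C norm_ge_zero order_trans by (blast intro: mult_mono)
  then show ?thesis
    using assms by (auto simp: linf_def smul_def cmul_def intro: CX_cmul[unfolded cmul_def])
qed

lemma linf_const_seq:
  assumes "compact (UNIV :: 'a::topological_space set)" and "(a :: 'a \<Rightarrow> complex) \<in> CX"
  shows "const_seq a \<in> linf"
  using CX_bounded[OF assms] assms(2) by (simp add: linf_def const_seq_def)

lemma linf_one_minus: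
  assumes "s \<in> linf"
  shows "(\<lambda>k x. 1 - s k x) \<in> linf"
proof -
  obtain B where B: "\<And>k x. cmod (s k x) \<le> B"
    using linf_bounded[OF assms] by blast
  have "cmod (1 - s k x) \<le> 1 + B" for k x
    using norm_triangle_ineq4[of 1 "s k x"] B[of k x] by simp
  moreover have "(\<lambda>x. 1 - s k x) \<in> CX" for k
    using linf_CX[OF assms, of k] by (simp add: CX_iff continuous_intros)
  ultimately show ?thesis
    by (auto simp: linf_def)
qed

lemma omega_trace_tendsto:
  assumes u: "free_ultrafilter \<omega>" and \<tau>s: "\<And>k. tracial_state (\<tau>s k)" and s: "s \<in> linf"
  shows "((\<lambda>k. \<tau>s k (s k)) \<longlongrightarrow> omega_trace \<omega> \<tau>s s) \<omega>"
proof -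
  obtain B where "\<And>k x. cmod (s k x) \<le> B"
    using linf_bounded[OF s] by blast
  then have "cmod (\<tau>s k (s k)) \<le> B" for k
    by (rule tracial_state_norm_le[OF \<tau>s linf_CX[OF s]])
  then show ?thesis
    unfolding omega_trace_def by (rule free_ultrafilter_bounded_tendsto_Lim[OF u])
qed

lemma omega_trace_eqI:
  "free_ultrafilter \<omega> \<Longrightarrow> ((\<lambda>k. \<tau>s k (s k)) \<longlongrightarrow> l) \<omega> \<Longrightarrow> omega_trace \<omega> \<tau>s s = l"
  unfolding omega_trace_def by (rule tendsto_Lim) (simp add: free_ultrafilter_nontrivial)

lemma J2_linf: "q \<in> J2 \<omega> \<Delta> \<Longrightarrow> q \<in> linf"
  unfolding J2_def mem_Collect_eq by (rule conjunct1)

lemma J2_SUP_tendsto_zero: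
  "q \<in> J2 \<omega> \<Delta> \<Longrightarrow> ((\<lambda>k. SUP \<tau>\<in>\<Delta>. Re (\<tau> (\<lambda>x. complex_of_real ((cmod (q k x))\<^sup>2)))) \<longlongrightarrow> 0) \<omega>"
  unfolding J2_def mem_Collect_eq by (rule conjunct2)

lemma J2_trace_norm_sq_tendsto_zero:
  assumes tr: "\<forall>\<tau>\<in>\<Delta>. tracial_state \<tau>" and q: "q \<in> J2 \<omega> \<Delta>" and \<tau>s: "\<And>k. \<tau>s k \<in> \<Delta>"
  shows "((\<lambda>k. Re (\<tau>s k (\<lambda>x. complex_of_real ((cmod (q k x))\<^sup>2)))) \<longlongrightarrow> 0) \<omega>"
proof -
  let ?Q = "\<lambda>k x. complex_of_real ((cmod (q k x))\<^sup>2)"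
  have "q \<in> linf"
    using q by (rule J2_linf)
  then obtain B where B: "\<And>k x. cmod (q k x) \<le> B"
    using linf_bounded by blast
  have Q: "?Q k \<in> CX" for k
    using linf_CX[OF \<open>q \<in> linf\<close>] unfolding CX_iff by (intro continuous_intros)
  have Q_bound: "cmod (?Q k x) \<le> B\<^sup>2" for k x
    unfolding norm_of_real abs_power2 using B norm_ge_zero by (rule power_mono)
  have "Re (\<tau> (?Q k)) \<le> B\<^sup>2" if "\<tau> \<in> \<Delta>" for \<tau> k
  proof -
    have "tracial_state \<tau>"
      using tr that by blast
    then have "cmod (\<tau> (?Q k)) \<le> B\<^sup>2"
      using Q Q_bound by (rule tracial_state_norm_le)
    then show ?thesis
      using complex_Re_le_cmod order_trans by blast
  qed
  then have upper: "Re (\<tau>s k (?Q k)) \<le> (SUP \<tau>\<in>\<Delta>. Re (\<tau> (?Q k)))" for k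
    by (rule cSUP_upper[OF \<tau>s bdd_aboveI2])
  have lower: "0 \<le> Re (\<tau>s k (?Q k))" for k
  proof -
    have "continuous_on UNIV (\<lambda>x. (cmod (q k x))\<^sup>2)"
      using linf_CX[OF \<open>q \<in> linf\<close>, of k] unfolding CX_iff by (intro continuous_intros)
    then show ?thesis
      using tracial_state_of_real_nonneg[of "\<tau>s k" "\<lambda>x. (cmod (q k x))\<^sup>2"] tr \<tau>s by simp
  qed
  show ?thesis
    by (rule tendsto_sandwich[OF always_eventually always_eventually tendsto_const J2_SUP_tendsto_zero[OF q]])
      (use lower upper in blast)+
qed

lemma J2_trace_dominated_tendsto_zero:
  assumes tr: "\<forall>\<tau>\<in>\<Delta>. tracial_state \<tau>" and q: "q \<in> J2 \<omega> \<Delta>" and \<tau>s: "\<And>k. \<tau>s k \<in> \<Delta>"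
    and r: "\<And>k. r k \<in> CX" and dom: "\<And>k x. cmod (r k x) \<le> M * cmod (q k x)"
  shows "((\<lambda>k. \<tau>s k (r k)) \<longlongrightarrow> 0) \<omega>"
proof -
  let ?X = "\<lambda>k. Re (\<tau>s k (\<lambda>x. complex_of_real ((cmod (q k x))\<^sup>2)))"
  have "q \<in> linf"
    using q by (rule J2_linf)
  have \<tau>: "tracial_state (\<tau>s k)" for k
    using tr \<tau>s by blast
  have "(cmod (\<tau>s k (r k)))\<^sup>2 \<le> M\<^sup>2 * ?X k" for k
  proof -
    have cq: "continuous_on UNIV (q k)" and cr: "continuous_on UNIV (r k)"
      using linf_CX[OF \<open>q \<in> linf\<close>] r by (auto simp: CX_iff)
    have "(cmod (\<tau>s k (r k)))\<^sup>2 \<le> Re (\<tau>s k (\<lambda>x. complex_of_real ((cmod (r k x))\<^sup>2)))"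
      using r by (rule tracial_state_norm_sq_le[OF \<tau>])
    also have "\<dots> \<le> Re (\<tau>s k (\<lambda>x. complex_of_real (M\<^sup>2 * (cmod (q k x))\<^sup>2)))"
    proof (rule tracial_state_mono[OF \<tau>])
      show "continuous_on UNIV (\<lambda>x. (cmod (r k x))\<^sup>2)"
        using cr by (intro continuous_intros)
      show "continuous_on UNIV (\<lambda>x. M\<^sup>2 * (cmod (q k x))\<^sup>2)"
        using cq by (intro continuous_intros)
      show "(cmod (r k x))\<^sup>2 \<le> M\<^sup>2 * (cmod (q k x))\<^sup>2" for x
        unfolding power_mult_distrib[symmetric] using dom norm_ge_zero by (rule power_mono)
    qed
    also have "\<dots> = M\<^sup>2 * ?X k"
    proof -
      have "(\<lambda>x. complex_of_real ((cmod (q k x))\<^sup>2)) \<in> CX"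
        using cq by (intro CX_of_real continuous_intros)
      from tracial_state_scale[OF \<tau> this, where c="complex_of_real (M\<^sup>2)"] show ?thesis
        by simp
    qed
    finally show ?thesis .
  qed
  then have "\<forall>k. norm (\<tau>s k (r k)) \<le> sqrt (M\<^sup>2 * ?X k)"
    using real_le_rsqrt by blast
  moreover have "((\<lambda>k. sqrt (M\<^sup>2 * ?X k)) \<longlongrightarrow> 0) \<omega>"
    using tendsto_real_sqrt[OF tendsto_mult_right_zero[OF J2_trace_norm_sq_tendsto_zero[OF tr q \<tau>s]]]
    by (simp only: real_sqrt_zero)
  ultimately show ?thesis
    by (rule Lim_null_comparison[OF always_eventually])
qed

lemma J2_trace_cmul_tendsto:
  assumes compact: "compact (UNIV :: 'a::topological_space set)"
    and tr: "\<forall>\<tau>\<in>\<Delta>. tracial_state \<tau>" and \<tau>s: "\<And>k. \<tau>s k \<in> \<Delta>"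
    and J: "(\<lambda>k x. s k x - t k x) \<in> J2 \<omega> \<Delta>" and s: "\<And>k. s k \<in> CX" and t: "\<And>k. t k \<in> CX"
    and a: "(a :: 'a \<Rightarrow> complex) \<in> CX"
  shows "((\<lambda>k. \<tau>s k (cmul a (s k)) - \<tau>s k (cmul a (t k))) \<longlongrightarrow> 0) \<omega>"
proof -
  obtain M where M: "\<And>x. cmod (a x) \<le> M"
    using CX_bounded[OF compact a] by blast
  have "((\<lambda>k. \<tau>s k (\<lambda>x. cmul a (s k) x - cmul a (t k) x)) \<longlongrightarrow> 0) \<omega>"
  proof (rule J2_trace_dominated_tendsto_zero[OF tr J \<tau>s])
    show "(\<lambda>x. cmul a (s k) x - cmul a (t k) x) \<in> CX" for k
      using CX_cmul[OF a s] CX_cmul[OF a t] unfolding CX_iff by (rule continuous_on_diff)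
    show "cmod (cmul a (s k) x - cmul a (t k) x) \<le> M * cmod (s k x - t k x)" for k x
    proof -
      have factor: "cmul a (s k) x - cmul a (t k) x = a x * (s k x - t k x)"
        by (simp add: cmul_def algebra_simps)
      show ?thesis
        unfolding factor norm_mult using M norm_ge_zero by (rule mult_right_mono)
    qed
  qed
  moreover have "\<tau>s k (\<lambda>x. cmul a (s k) x - cmul a (t k) x) = \<tau>s k (cmul a (s k)) - \<tau>s k (cmul a (t k))" for k
    using tr \<tau>s CX_cmul[OF a s] CX_cmul[OF a t] by (simp add: tracial_state_diff)
  ultimately show ?thesis
    by simp
qed

section \<open>Faces and Bauer's maximum principle\<close>

definition fcomb :: "real \<Rightarrow> ('v \<Rightarrow> complex) \<Rightarrow> ('v \<Rightarrow> complex) \<Rightarrow> 'v \<Rightarrow> complex" where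
  "fcomb t \<sigma> \<rho> = (\<lambda>f. complex_of_real t * \<sigma> f + complex_of_real (1 - t) * \<rho> f)"

definition fface :: "('v \<Rightarrow> complex) set \<Rightarrow> ('v \<Rightarrow> complex) set \<Rightarrow> bool" where
  "fface K F \<longleftrightarrow> F \<subseteq> K \<and>
     (\<forall>\<sigma>\<in>K. \<forall>\<rho>\<in>K. \<forall>t. 0 < t \<and> t < 1 \<and> fcomb t \<sigma> \<rho> \<in> F \<longrightarrow> \<sigma> \<in> F \<and> \<rho> \<in> F)"

definition faffine_on :: "('v \<Rightarrow> complex) set \<Rightarrow> (('v \<Rightarrow> complex) \<Rightarrow> real) \<Rightarrow> bool" where
  "faffine_on K \<psi> \<longleftrightarrow>
     (\<forall>\<sigma>\<in>K. \<forall>\<rho>\<in>K. \<forall>t. 0 < t \<and> t < 1 \<longrightarrow> \<psi> (fcomb t \<sigma> \<rho>) = t * \<psi> \<sigma> + (1 - t) * \<psi> \<rho>)"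

lemma fcomb_same: "fcomb t \<sigma> \<sigma> = \<sigma>"
  by (simp add: fcomb_def fun_eq_iff algebra_simps flip: distrib_right)

lemma extreme_fpoints_subset: "extreme_fpoints K \<subseteq> K"
  by (auto simp: extreme_fpoints_def)

lemma extreme_fpointsD:
  assumes "e \<in> extreme_fpoints K" "\<sigma> \<in> K" "\<rho> \<in> K" "0 < t" "t < 1" "e = fcomb t \<sigma> \<rho>"
  shows "\<sigma> = \<rho>"
  using assms unfolding extreme_fpoints_def fcomb_def by blast

lemma fface_refl: "fface K K"
  by (auto simp: fface_def)

lemma fface_subset: "fface K F \<Longrightarrow> F \<subseteq> K"
  by (simp add: fface_def)

lemma fface_Inter:
  assumes "C \<noteq> {}" and "\<And>F. F \<in> C \<Longrightarrow> fface K F"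
  shows "fface K (\<Inter>C)"
  using assms unfolding fface_def by blast

lemma convex_comb_eq_upper_bound:
  fixes a b m t :: real
  assumes "0 < t" "t < 1" "a \<le> m" "b \<le> m" "t * a + (1 - t) * b = m"
  shows "a = m" and "b = m"
proof -
  have "t * (m - a) + (1 - t) * (m - b) = 0"
    using assms(5) by (simp add: algebra_simps)
  moreover have "t * (m - a) \<ge> 0" "(1 - t) * (m - b) \<ge> 0"
    using assms(1-4) by simp_all
  ultimately have "t * (m - a) = 0" "(1 - t) * (m - b) = 0"
    by linarith+
  then show "a = m" "b = m"
    using assms(1,2) by simp_all
qed

lemma fface_argmax:
  assumes face: "fface K F" and "compact F" "closed F" "F \<noteq> {}"
    and cont: "continuous_on F \<psi>" and aff: "faffine_on K \<psi>"
  defines "F' \<equiv> {\<sigma>\<in>F. \<forall>\<rho>\<in>F. \<psi> \<rho> \<le> \<psi> \<sigma>}"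
  shows "fface K F'" and "F' \<noteq> {}" and "closed F'"
proof -
  obtain \<sigma>0 where \<sigma>0: "\<sigma>0 \<in> F" "\<forall>\<rho>\<in>F. \<psi> \<rho> \<le> \<psi> \<sigma>0"
    using continuous_attains_sup[OF \<open>compact F\<close> \<open>F \<noteq> {}\<close> cont] by blast
  then have F': "F' = F \<inter> \<psi> -` {\<psi> \<sigma>0}"
    by (auto simp: F'_def intro: order.antisym)
  show "F' \<noteq> {}"
    using \<sigma>0 F' by blast
  show "closed F'"
    unfolding F' using cont \<open>closed F\<close> by (rule continuous_closed_preimage) simp
  have "\<sigma> \<in> F' \<and> \<rho> \<in> F'"
    if "\<sigma> \<in> K" "\<rho> \<in> K" "0 < t" "t < 1" "fcomb t \<sigma> \<rho> \<in> F'" for \<sigma> \<rho> t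
  proof -
    have in_F: "\<sigma> \<in> F" "\<rho> \<in> F"
      using face that F' unfolding fface_def by blast+
    then have "\<psi> \<sigma> \<le> \<psi> \<sigma>0" "\<psi> \<rho> \<le> \<psi> \<sigma>0"
      using \<sigma>0 by auto
    moreover have "t * \<psi> \<sigma> + (1 - t) * \<psi> \<rho> = \<psi> \<sigma>0"
      using aff that F' by (auto simp: faffine_on_def)
    ultimately have "\<psi> \<sigma> = \<psi> \<sigma>0 \<and> \<psi> \<rho> = \<psi> \<sigma>0"
      using \<open>0 < t\<close> \<open>t < 1\<close> convex_comb_eq_upper_bound by blast
    then show ?thesis
      using in_F F' by blast
  qed
  moreover have "F' \<subseteq> K"
    using face fface_subset F'_def by blast
  ultimately show "fface K F'"
    unfolding fface_def by blast
qed

lemma closed_fface_chain_Inter: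
  assumes K: "compact K" and "C \<noteq> {}"
    and faces: "\<And>F. F \<in> C \<Longrightarrow> fface K F \<and> F \<noteq> {} \<and> closed F"
    and chain: "\<And>F G. F \<in> C \<Longrightarrow> G \<in> C \<Longrightarrow> F \<subseteq> G \<or> G \<subseteq> F"
  shows "fface K (\<Inter>C)" and "closed (\<Inter>C)" and "\<Inter>C \<noteq> {}"
proof -
  show "fface K (\<Inter>C)"
    by (rule fface_Inter[OF \<open>C \<noteq> {}\<close>]) (use faces in blast)
  show "closed (\<Inter>C)"
    by (rule closed_Inter) (use faces in blast)
  have "K \<inter> \<Inter>C \<noteq> {}"
  proof (rule compact_imp_fip[OF K])
    show "closed F" if "F \<in> C" for F
      using faces that by blast
    show "K \<inter> \<Inter>C' \<noteq> {}" if "finite C'" "C' \<subseteq> C" for C'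
    proof (cases "C' = {}")
      case True
      obtain F where "F \<in> C"
        using \<open>C \<noteq> {}\<close> by blast
      then have "F \<subseteq> K" "F \<noteq> {}"
        using faces fface_subset by blast+
      then show ?thesis
        using True by blast
    next
      case False
      have "subset.chain C C'"
        unfolding subset_chain_def using that chain by blast
      then have "\<Inter>C' \<in> C'"
        using \<open>finite C'\<close> False by (intro Inter_in_chain)
      then have "\<Inter>C' \<subseteq> K" "\<Inter>C' \<noteq> {}"
        using faces that fface_subset by blast+
      then show ?thesis
        by blast
    qed
  qed
  then show "\<Inter>C \<noteq> {}"
    by blast
qed

lemma minimal_closed_fface_exists:
  assumes K: "compact K" and F: "fface K F" "F \<noteq> {}" "closed F"
  obtains M where "fface K M" "M \<noteq> {}" "closed M" "M \<subseteq> F"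
    and "\<And>M'. fface K M' \<Longrightarrow> M' \<noteq> {} \<Longrightarrow> closed M' \<Longrightarrow> M' \<subseteq> M \<Longrightarrow> M' = M"
proof -
  define A where "A = {G. fface K G \<and> G \<noteq> {} \<and> closed G \<and> G \<subseteq> F}"
  have "partial_order_on A (relation_of (\<lambda>X Y. Y \<subseteq> X) A)"
    unfolding partial_order_on_def preorder_on_def refl_on_def trans_def antisym_def relation_of_def
    by auto
  then have "\<exists>M\<in>A. \<forall>G\<in>A. G \<subseteq> M \<longrightarrow> G = M"
  proof (rule predicate_Zorn)
    fix C assume C: "C \<in> Chains (relation_of (\<lambda>X Y. Y \<subseteq> X) A)"
    then have "C \<subseteq> A"
      by (rule Chains_relation_of)
    have chain: "G \<subseteq> H \<or> H \<subseteq> G" if "G \<in> C" "H \<in> C" for G H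
      using C that unfolding Chains_def relation_of_def by blast
    show "\<exists>U\<in>A. \<forall>G\<in>C. U \<subseteq> G"
    proof (cases "C = {}")
      case True
      then show ?thesis
        using F by (auto simp: A_def)
    next
      case False
      have faces: "fface K G \<and> G \<noteq> {} \<and> closed G" if "G \<in> C" for G
        using that \<open>C \<subseteq> A\<close> by (auto simp: A_def)
      have "\<Inter>C \<subseteq> F"
        using False \<open>C \<subseteq> A\<close> by (auto simp: A_def)
      then have "\<Inter>C \<in> A"
        using closed_fface_chain_Inter[OF K False faces chain] by (simp add: A_def)
      then show ?thesis
        by blast
    qed
  qed
  then obtain M where "M \<in> A" and minimal: "\<forall>G\<in>A. G \<subseteq> M \<longrightarrow> G = M"
    by blast
  then have M: "fface K M" "M \<noteq> {}" "closed M" "M \<subseteq> F"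
    by (simp_all add: A_def)
  moreover have "M' = M" if "fface K M'" "M' \<noteq> {}" "closed M'" "M' \<subseteq> M" for M'
    using that minimal M(4) unfolding A_def by blast
  ultimately show thesis
    by (rule that)
qed

text \<open>The real and imaginary parts of the evaluations separate the points of a minimal face.\<close>
lemma minimal_closed_fface_singleton:
  assumes K: "compact K" "closed K"
    and M: "fface K M" "M \<noteq> {}" "closed M"
    and minimal: "\<And>M'. fface K M' \<Longrightarrow> M' \<noteq> {} \<Longrightarrow> closed M' \<Longrightarrow> M' \<subseteq> M \<Longrightarrow> M' = M"
    and "\<sigma> \<in> M" "\<rho> \<in> M"
  shows "\<sigma> = \<rho>"
proof (rule ccontr)
  assume "\<sigma> \<noteq> \<rho>"
  then obtain f where "\<sigma> f \<noteq> \<rho> f"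
    by auto
  then obtain \<psi> where \<psi>: "\<psi> = (\<lambda>\<tau>. Re (\<tau> f)) \<or> \<psi> = (\<lambda>\<tau>. Im (\<tau> f))" and "\<psi> \<sigma> \<noteq> \<psi> \<rho>"
  proof (cases "Re (\<sigma> f) = Re (\<rho> f)")
    case True
    then show ?thesis
      using that[of "\<lambda>\<tau>. Im (\<tau> f)"] \<open>\<sigma> f \<noteq> \<rho> f\<close> complex_eqI by blast
  next
    case False
    then show ?thesis
      using that[of "\<lambda>\<tau>. Re (\<tau> f)"] by blast
  qed
  have "continuous_on M (\<lambda>\<tau>. \<tau> f)"
    by (rule continuous_on_subset[OF continuous_on_product_coordinates]) simp
  then have "continuous_on M \<psi>"
    using \<psi> by (elim disjE) (simp_all add: continuous_on_Re continuous_on_Im)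
  moreover have "faffine_on K \<psi>"
    using \<psi> by (auto simp: faffine_on_def fcomb_def)
  moreover have "compact M"
    using compact_Int_closed[OF K(1) M(3)] fface_subset[OF M(1)] by (simp add: Int_absorb1)
  ultimately have "fface K {\<tau>\<in>M. \<forall>\<tau>'\<in>M. \<psi> \<tau>' \<le> \<psi> \<tau>}"
    and "{\<tau>\<in>M. \<forall>\<tau>'\<in>M. \<psi> \<tau>' \<le> \<psi> \<tau>} \<noteq> {}" and "closed {\<tau>\<in>M. \<forall>\<tau>'\<in>M. \<psi> \<tau>' \<le> \<psi> \<tau>}"
    using fface_argmax[OF M(1) _ M(3,2)] by blast+
  then have "{\<tau>\<in>M. \<forall>\<tau>'\<in>M. \<psi> \<tau>' \<le> \<psi> \<tau>} = M"
    by (rule minimal) blast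
  then have "\<psi> \<rho> \<le> \<psi> \<sigma>" "\<psi> \<sigma> \<le> \<psi> \<rho>"
    using \<open>\<sigma> \<in> M\<close> \<open>\<rho> \<in> M\<close> by blast+
  then show False
    using \<open>\<psi> \<sigma> \<noteq> \<psi> \<rho>\<close> by simp
qed

lemma fface_singleton_extreme:
  assumes "fface K M" "e \<in> M" and single: "\<And>\<sigma> \<rho>. \<sigma> \<in> M \<Longrightarrow> \<rho> \<in> M \<Longrightarrow> \<sigma> = \<rho>"
  shows "e \<in> extreme_fpoints K"
  unfolding extreme_fpoints_def
proof (intro CollectI conjI ballI allI impI)
  show "e \<in> K"
    using assms fface_subset by blast
  fix \<sigma> \<rho> t
  assume "\<sigma> \<in> K" "\<rho> \<in> K"
    and t: "0 < t \<and> t < 1 \<and> e = (\<lambda>f. complex_of_real t * \<sigma> f + complex_of_real (1 - t) * \<rho> f)"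
  then have "fcomb t \<sigma> \<rho> \<in> M"
    using \<open>e \<in> M\<close> by (simp add: fcomb_def)
  then have "\<sigma> \<in> M" "\<rho> \<in> M"
    using \<open>fface K M\<close> \<open>\<sigma> \<in> K\<close> \<open>\<rho> \<in> K\<close> t unfolding fface_def by blast+
  then show "\<sigma> = \<rho>"
    by (rule single)
qed

text \<open>Faces and extreme points are taken relative to \<open>K\<close>.
  Closedness is assumed separately because the library has no Hausdorff instance for function
  spaces, so compactness does not imply it.\<close>
theorem bauer_maximum_principle:
  fixes K :: "(('a \<Rightarrow> complex) \<Rightarrow> complex) set"
  assumes K: "compact K" "closed K" "K \<noteq> {}"
    and cont: "continuous_on K \<phi>" and aff: "faffine_on K \<phi>"
  shows "\<exists>e\<in>extreme_fpoints K. \<forall>\<sigma>\<in>K. \<phi> \<sigma> \<le> \<phi> e"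
proof -
  define F where "F = {\<sigma>\<in>K. \<forall>\<rho>\<in>K. \<phi> \<rho> \<le> \<phi> \<sigma>}"
  have F: "fface K F" "F \<noteq> {}" "closed F"
    unfolding F_def by (rule fface_argmax[OF fface_refl K cont aff])+
  obtain M where M: "fface K M" "M \<noteq> {}" "closed M" "M \<subseteq> F"
    and minimal: "\<And>M'. fface K M' \<Longrightarrow> M' \<noteq> {} \<Longrightarrow> closed M' \<Longrightarrow> M' \<subseteq> M \<Longrightarrow> M' = M"
    using minimal_closed_fface_exists[OF K(1) F] by blast
  obtain e where "e \<in> M"
    using M(2) by blast
  have "e \<in> extreme_fpoints K"
    by (rule fface_singleton_extreme[OF M(1) \<open>e \<in> M\<close> minimal_closed_fface_singleton[OF K(1,2) M(1-3) minimal]])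
  moreover have "\<forall>\<sigma>\<in>K. \<phi> \<sigma> \<le> \<phi> e"
    using \<open>e \<in> M\<close> M(4) by (auto simp: F_def)
  ultimately show ?thesis
    by blast
qed

text \<open>Bauer's principle applied to \<open>Re (c D)\<close> with \<open>c = cnj (sgn (D \<sigma>))\<close>.\<close>
lemma extreme_fpoints_norm_dominates:
  fixes K :: "(('a \<Rightarrow> complex) \<Rightarrow> complex) set"
  assumes K: "compact K" "closed K" and "\<sigma> \<in> K" and cont: "continuous_on K D"
    and aff: "\<And>\<sigma> \<rho> t. \<sigma> \<in> K \<Longrightarrow> \<rho> \<in> K \<Longrightarrow> 0 < t \<Longrightarrow> t < 1 \<Longrightarrow>
      D (fcomb t \<sigma> \<rho>) = of_real t * D \<sigma> + of_real (1 - t) * D \<rho>"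
  shows "\<exists>e\<in>extreme_fpoints K. cmod (D \<sigma>) \<le> cmod (D e)"
proof -
  define c where "c = cnj (sgn (D \<sigma>))"
  have "continuous_on K (\<lambda>\<tau>. Re (c * D \<tau>))"
    using cont by (intro continuous_intros)
  moreover have "faffine_on K (\<lambda>\<tau>. Re (c * D \<tau>))"
    using aff by (simp add: faffine_on_def ring_distribs)
  ultimately obtain e where e: "e \<in> extreme_fpoints K" and max: "\<forall>\<tau>\<in>K. Re (c * D \<tau>) \<le> Re (c * D e)"
    using bauer_maximum_principle[OF K] \<open>\<sigma> \<in> K\<close> by blast
  have "cmod (D \<sigma>) = Re (c * D \<sigma>)"
    by (cases "D \<sigma> = 0")
      (simp_all add: c_def sgn_div_norm divide_simps cmod_power2 flip: power2_eq_square)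
  also have "\<dots> \<le> Re (c * D e)"
    using max \<open>\<sigma> \<in> K\<close> by blast
  also have "\<dots> \<le> cmod c * cmod (D e)"
    using complex_Re_le_cmod[of "c * D e"] by (simp add: norm_mult)
  also have "\<dots> \<le> cmod (D e)"
    by (simp add: c_def norm_sgn mult_left_le_one_le)
  finally show ?thesis
    using e by blast
qed

section \<open>Cutting traces by ample projections\<close>

lemma omega_trace_cut_add:
  assumes compact: "compact (UNIV :: 'a::topological_space set)" and u: "free_ultrafilter \<omega>"
    and \<tau>s: "\<And>k. tracial_state (\<tau>s k)" and c: "c \<in> linf" and x: "(x :: 'a \<Rightarrow> complex) \<in> CX"
    and lim: "((\<lambda>k. \<tau>s k x) \<longlongrightarrow> l) \<omega>"
  shows "omega_trace \<omega> \<tau>s (smul (const_seq x) c)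
           + omega_trace \<omega> \<tau>s (smul (const_seq x) (\<lambda>k y. 1 - c k y)) = l"
proof -
  let ?c1 = "smul (const_seq x) c" and ?c2 = "smul (const_seq x) (\<lambda>k y. 1 - c k y)"
  have in_linf: "?c1 \<in> linf" "?c2 \<in> linf"
    using linf_const_seq[OF compact x] c by (simp_all add: linf_smul linf_one_minus)
  have "\<tau>s k (?c1 k) + \<tau>s k (?c2 k) = \<tau>s k x" for k
  proof -
    have "(\<lambda>y. ?c1 k y + ?c2 k y) = x"
      by (simp add: smul_def const_seq_def cmul_def fun_eq_iff algebra_simps)
    then show ?thesis
      using tracial_state_add[OF \<tau>s[of k] linf_CX[OF in_linf(1), of k] linf_CX[OF in_linf(2), of k]]
      by simp
  qed
  moreover have "((\<lambda>k. \<tau>s k (?c1 k) + \<tau>s k (?c2 k)) \<longlongrightarrow> omega_trace \<omega> \<tau>s ?c1 + omega_trace \<omega> \<tau>s ?c2) \<omega>"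
    using omega_trace_tendsto[OF u \<tau>s in_linf(1)] omega_trace_tendsto[OF u \<tau>s in_linf(2)]
    by (rule tendsto_add)
  ultimately show ?thesis
    using tendsto_unique[OF free_ultrafilter_nontrivial[OF u] _ lim] by simp
qed

text \<open>Ampleness splits the limit trace \<open>e\<close> as \<open>t \<sigma>\<^sub>1 + (1 - t) \<sigma>\<^sub>2\<close> inside \<open>\<Delta>\<close>; when \<open>e\<close> is
  extreme, \<open>\<sigma>\<^sub>1 = e\<close>.\<close>
lemma omega_trace_cut_extreme:
  fixes \<Delta> :: "(('a::topological_space \<Rightarrow> complex) \<Rightarrow> complex) set"
  assumes compact: "compact (UNIV :: 'a set)" and u: "free_ultrafilter \<omega>"
    and tr: "\<forall>\<tau>\<in>\<Delta>. tracial_state \<tau>" and p: "p \<in> linf" and t: "0 < t" "t < 1"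
    and es: "\<And>k. es k \<in> \<Delta>" and tp: "omega_trace \<omega> es p = of_real t" and amp: "ample \<omega> \<Delta> p"
    and e: "e \<in> extreme_fpoints \<Delta>" and lim: "\<And>x. ((\<lambda>k. es k x) \<longlongrightarrow> e x) \<omega>"
    and a: "a \<in> CX"
  shows "omega_trace \<omega> es (smul (const_seq a) p) = of_real t * e a"
proof -
  define \<sigma>\<^sub>1 where "\<sigma>\<^sub>1 = (\<lambda>x. if x \<in> CX then omega_trace \<omega> es (smul (const_seq x) p) / of_real t else 0)"
  define \<sigma>\<^sub>2 where "\<sigma>\<^sub>2 = (\<lambda>x. if x \<in> CX
      then omega_trace \<omega> es (smul (const_seq x) (\<lambda>k y. 1 - p k y)) / (1 - of_real t) else 0)"
  have "of_real t \<noteq> (0::complex)" "of_real t \<noteq> (1::complex)"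
    using t by simp_all
  moreover note amp[unfolded ample_def, THEN spec[of _ es], THEN mp, OF allI[OF es], unfolded Let_def tp]
  ultimately have \<sigma>: "\<sigma>\<^sub>1 \<in> \<Delta>" "\<sigma>\<^sub>2 \<in> \<Delta>"
    unfolding \<sigma>\<^sub>1_def \<sigma>\<^sub>2_def by simp_all
  have es_tracial: "tracial_state (es k)" for k
    using tr es by blast
  have e_tracial: "tracial_state e"
    using tr e extreme_fpoints_subset by blast
  have "e = fcomb t \<sigma>\<^sub>1 \<sigma>\<^sub>2"
  proof
    fix x
    show "e x = fcomb t \<sigma>\<^sub>1 \<sigma>\<^sub>2 x"
    proof (cases "x \<in> CX")
      case True
      then show ?thesis
        using omega_trace_cut_add[OF compact u es_tracial p True lim] t
        by (simp add: fcomb_def \<sigma>\<^sub>1_def \<sigma>\<^sub>2_def)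
    next
      case False
      then show ?thesis
        by (simp add: fcomb_def \<sigma>\<^sub>1_def \<sigma>\<^sub>2_def tracial_state_outside[OF e_tracial])
    qed
  qed
  moreover from this have "\<sigma>\<^sub>1 = \<sigma>\<^sub>2"
    using extreme_fpointsD[OF e \<sigma> t] by blast
  ultimately have "e = \<sigma>\<^sub>1"
    by (simp add: fcomb_same)
  then show ?thesis
    using a t by (simp add: \<sigma>\<^sub>1_def)
qed

lemma extreme_traces_cut_tendsto:
  fixes \<Delta> :: "(('a::topological_space \<Rightarrow> complex) \<Rightarrow> complex) set"
  assumes compact: "compact (UNIV :: 'a set)" and u: "free_ultrafilter \<omega>"
    and tr: "\<forall>\<tau>\<in>\<Delta>. tracial_state \<tau>" and ext: "compact (extreme_fpoints \<Delta>)"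
    and p: "p \<in> linf" and t: "0 < t" "t < 1"
    and tp: "\<forall>\<tau>s. (\<forall>k. \<tau>s k \<in> \<Delta>) \<longrightarrow> omega_trace \<omega> \<tau>s p = of_real t"
    and amp: "ample \<omega> \<Delta> p" and es: "\<And>k. es k \<in> extreme_fpoints \<Delta>" and a: "a \<in> CX"
  shows "((\<lambda>k. es k (cmul a (p k)) - of_real t * es k a) \<longlongrightarrow> 0) \<omega>"
proof -
  from free_ultrafilter_compact_tendsto[OF u ext es]
  obtain e where e: "e \<in> extreme_fpoints \<Delta>" and es_lim: "(es \<longlongrightarrow> e) \<omega>" ..
  have lim: "((\<lambda>k. es k x) \<longlongrightarrow> e x) \<omega>" for x
    using continuous_on_tendsto_compose[OF continuous_on_product_coordinates[of x] es_lim] by simp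
  have es_\<Delta>: "es k \<in> \<Delta>" for k
    using extreme_fpoints_subset es by (rule subsetD)
  have "smul (const_seq a) p \<in> linf"
    using linf_const_seq[OF compact a] p by (rule linf_smul)
  then have "((\<lambda>k. es k (smul (const_seq a) p k)) \<longlongrightarrow> omega_trace \<omega> es (smul (const_seq a) p)) \<omega>"
    by (rule omega_trace_tendsto[OF u, rotated]) (use tr es_\<Delta> in blast)
  also have "omega_trace \<omega> es (smul (const_seq a) p) = of_real t * e a"
    by (rule omega_trace_cut_extreme[OF compact u tr p t es_\<Delta> _ amp e lim a]) (use tp es_\<Delta> in blast)
  finally have "((\<lambda>k. es k (cmul a (p k))) \<longlongrightarrow> of_real t * e a) \<omega>"
    by (simp add: smul_def const_seq_def)
  from tendsto_diff[OF this tendsto_mult_left[OF lim[of a], of "of_real t"]] show ?thesis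
    by simp
qed

lemma traces_cut_tendsto:
  fixes \<Delta> :: "(('a::topological_space \<Rightarrow> complex) \<Rightarrow> complex) set"
  assumes compact: "compact (UNIV :: 'a set)" and u: "free_ultrafilter \<omega>"
    and tr: "\<forall>\<tau>\<in>\<Delta>. tracial_state \<tau>" and "closed \<Delta>" and ext: "compact (extreme_fpoints \<Delta>)"
    and p: "p \<in> linf" and t: "0 < t" "t < 1"
    and tp: "\<forall>\<tau>s. (\<forall>k. \<tau>s k \<in> \<Delta>) \<longrightarrow> omega_trace \<omega> \<tau>s p = of_real t"
    and amp: "ample \<omega> \<Delta> p" and \<tau>s: "\<And>k. \<tau>s k \<in> \<Delta>" and a: "a \<in> CX"
  shows "((\<lambda>k. \<tau>s k (cmul a (p k)) - of_real t * \<tau>s k a) \<longlongrightarrow> 0) \<omega>"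
proof -
  define D where "D k \<sigma> = \<sigma> (cmul a (p k)) - of_real t * \<sigma> a" for k and \<sigma> :: "('a \<Rightarrow> complex) \<Rightarrow> complex"
  have coord: "continuous_on \<Delta> (\<lambda>\<sigma>. \<sigma> f)" for f
    by (rule continuous_on_subset[OF continuous_on_product_coordinates]) simp
  have "\<exists>e\<in>extreme_fpoints \<Delta>. cmod (D k (\<tau>s k)) \<le> cmod (D k e)" for k
  proof (rule extreme_fpoints_norm_dominates)
    show "compact \<Delta>"
      using compact tr \<open>closed \<Delta>\<close> by (rule tracial_states_compact)
    show "continuous_on \<Delta> (D k)"
      unfolding D_def by (rule continuous_on_diff[OF coord continuous_on_mult_left[OF coord]])
    show "D k (fcomb s \<sigma> \<rho>) = of_real s * D k \<sigma> + of_real (1 - s) * D k \<rho>" for \<sigma> \<rho> s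
      by (simp add: D_def fcomb_def algebra_simps)
  qed (use \<open>closed \<Delta>\<close> \<tau>s in auto)
  then have "\<forall>k. \<exists>e. e \<in> extreme_fpoints \<Delta> \<and> cmod (D k (\<tau>s k)) \<le> cmod (D k e)"
    by blast
  then obtain es where es: "\<And>k. es k \<in> extreme_fpoints \<Delta>"
    and dominated: "\<forall>k. norm (D k (\<tau>s k)) \<le> cmod (D k (es k))"
    by (metis choice)
  have "((\<lambda>k. D k (es k)) \<longlongrightarrow> 0) \<omega>"
    unfolding D_def by (rule extreme_traces_cut_tendsto[OF compact u tr ext p t tp amp es a])
  from Lim_null_comparison[OF always_eventually[OF dominated] tendsto_norm_zero[OF this]]
  show ?thesis
    unfolding D_def .
qed

lemma partition_cut_tendsto:
  fixes \<Delta> :: "(('a::topological_space \<Rightarrow> complex) \<Rightarrow> complex) set"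
  assumes compact: "compact (UNIV :: 'a set)" and u: "free_ultrafilter \<omega>"
    and tr: "\<forall>\<tau>\<in>\<Delta>. tracial_state \<tau>" and "closed \<Delta>" and ext: "compact (extreme_fpoints \<Delta>)"
    and "n \<ge> 1" and pou: "partition_of_unity \<omega> \<Delta> n p"
    and tp: "\<forall>\<tau>s. (\<forall>k. \<tau>s k \<in> \<Delta>) \<longrightarrow> omega_trace \<omega> \<tau>s (p i) = 1 / of_nat n"
    and amp: "ample \<omega> \<Delta> (p i)" and \<tau>s: "\<And>k. \<tau>s k \<in> \<Delta>" and a: "a \<in> CX" and "i < n"
  shows "((\<lambda>k. \<tau>s k (cmul a (p i k)) - \<tau>s k a / of_nat n) \<longlongrightarrow> 0) \<omega>"
proof (cases "n = 1")
  case True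
  txt \<open>Here \<open>t = 1\<close> and ampleness provides no second trace; instead \<open>p\<^sub>0 = 1\<close> modulo \<open>J\<^sub>2\<close>.\<close>
  have "i = 0"
    using True \<open>i < n\<close> by simp
  have "(\<lambda>k x. (\<Sum>j<n. p j k x) - 1) \<in> J2 \<omega> \<Delta>"
    using pou by (simp add: partition_of_unity_def qeq_def)
  then have J: "(\<lambda>k x. p i k x - 1) \<in> J2 \<omega> \<Delta>"
    using True \<open>i = 0\<close> by simp
  have "p i \<in> linf"
    using pou \<open>i < n\<close> by (simp add: partition_of_unity_def)
  have "((\<lambda>k. \<tau>s k (cmul a (p i k)) - \<tau>s k (cmul a (\<lambda>x. 1))) \<longlongrightarrow> 0) \<omega>"
    by (rule J2_trace_cmul_tendsto[OF compact tr _ J])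
      (use \<tau>s linf_CX[OF \<open>p i \<in> linf\<close>] a in \<open>auto simp: CX_iff\<close>)
  then show ?thesis
    using True by (simp add: cmul_def)
next
  case False
  then have t: "0 < 1 / real n" "1 / real n < 1"
    using \<open>n \<ge> 1\<close> by simp_all
  have "p i \<in> linf"
    using pou \<open>i < n\<close> by (simp add: partition_of_unity_def)
  from traces_cut_tendsto[OF compact u tr \<open>closed \<Delta>\<close> ext this t _ amp \<tau>s a] tp
  show ?thesis
    by (simp add: divide_inverse mult.commute)
qed

lemma partition_compress_trace:
  fixes \<Delta> :: "(('a::topological_space \<Rightarrow> complex) \<Rightarrow> complex) set"
  assumes compact: "compact (UNIV :: 'a set)" and u: "free_ultrafilter \<omega>"
    and tr: "\<forall>\<tau>\<in>\<Delta>. tracial_state \<tau>" and "closed \<Delta>" and ext: "compact (extreme_fpoints \<Delta>)"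
    and "n \<ge> 1" and pou: "partition_of_unity \<omega> \<Delta> n p"
    and tp: "\<forall>\<tau>s. (\<forall>k. \<tau>s k \<in> \<Delta>) \<longrightarrow> omega_trace \<omega> \<tau>s (p i) = 1 / of_nat n"
    and amp: "ample \<omega> \<Delta> (p i)" and \<tau>s: "\<forall>k. \<tau>s k \<in> \<Delta>" and a: "a \<in> CX" and "i < n"
  shows "omega_trace \<omega> \<tau>s (smul (smul (p i) (const_seq a)) (p i))
           = 1 / of_nat n * omega_trace \<omega> \<tau>s (const_seq a)"
proof (rule omega_trace_eqI[OF u])
  have p: "p i \<in> linf"
    using pou \<open>i < n\<close> by (simp add: partition_of_unity_def)
  have J: "(\<lambda>k x. smul (p i) (p i) k x - p i k x) \<in> J2 \<omega> \<Delta>"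
    using pou \<open>i < n\<close> by (simp add: partition_of_unity_def qeq_def)
  have "((\<lambda>k. \<tau>s k (cmul a (smul (p i) (p i) k)) - \<tau>s k (cmul a (p i k))) \<longlongrightarrow> 0) \<omega>"
    by (rule J2_trace_cmul_tendsto[OF compact tr _ J])
      (use \<tau>s linf_CX[OF linf_smul[OF p p]] linf_CX[OF p] a in auto)
  moreover have "((\<lambda>k. \<tau>s k (cmul a (p i k)) - \<tau>s k a / of_nat n) \<longlongrightarrow> 0) \<omega>"
    using partition_cut_tendsto[OF compact u tr \<open>closed \<Delta>\<close> ext \<open>n \<ge> 1\<close> pou tp amp \<tau>s[rule_format] a \<open>i < n\<close>] .
  moreover have "((\<lambda>k. \<tau>s k a) \<longlongrightarrow> omega_trace \<omega> \<tau>s (const_seq a)) \<omega>"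
    using omega_trace_tendsto[OF u _ linf_const_seq[OF compact a]] tr \<tau>s by (simp add: const_seq_def)
  then have "((\<lambda>k. \<tau>s k a / of_nat n) \<longlongrightarrow> omega_trace \<omega> \<tau>s (const_seq a) / of_nat n) \<omega>"
    using \<open>n \<ge> 1\<close> by (simp add: tendsto_divide)
  ultimately have "((\<lambda>k. (\<tau>s k (cmul a (smul (p i) (p i) k)) - \<tau>s k (cmul a (p i k)))
      + (\<tau>s k (cmul a (p i k)) - \<tau>s k a / of_nat n) + \<tau>s k a / of_nat n)
      \<longlongrightarrow> 0 + 0 + omega_trace \<omega> \<tau>s (const_seq a) / of_nat n) \<omega>"
    by (rule tendsto_add[OF tendsto_add])
  moreover have "cmul a (smul (p i) (p i) k) = smul (smul (p i) (const_seq a)) (p i) k" for k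
    by (simp add: cmul_def smul_def const_seq_def fun_eq_iff mult_ac)
  ultimately show "((\<lambda>k. \<tau>s k (smul (smul (p i) (const_seq a)) (p i) k))
      \<longlongrightarrow> 1 / of_nat n * omega_trace \<omega> \<tau>s (const_seq a)) \<omega>"
    by simp
qed

lemma approx_divisible_if_exact_compression:
  assumes "\<And>n. n \<ge> 1 \<Longrightarrow> \<exists>p. partition_of_unity \<omega> \<Delta> n p \<and>
    (\<forall>a \<tau>s i. a \<in> CX \<and> (\<forall>k. \<tau>s k \<in> \<Delta>) \<and> i < n \<longrightarrow>
       omega_trace \<omega> \<tau>s (smul (smul (p i) (const_seq a)) (p i)) = 1 / of_nat n * omega_trace \<omega> \<tau>s (const_seq a))"
  shows "approx_divisible \<omega> \<Delta>"
  unfolding approx_divisible_def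
proof (intro exI[of _ 1] conjI allI impI)
  fix n :: nat
  assume "1 \<le> n"
  then obtain p where p: "partition_of_unity \<omega> \<Delta> n p"
    and exact: "\<forall>a \<tau>s i. a \<in> CX \<and> (\<forall>k. \<tau>s k \<in> \<Delta>) \<and> i < n \<longrightarrow>
       omega_trace \<omega> \<tau>s (smul (smul (p i) (const_seq a)) (p i)) = 1 / of_nat n * omega_trace \<omega> \<tau>s (const_seq a)"
    using assms by blast
  have "Re (omega_trace \<omega> \<tau>s (smul (smul (p i) (const_seq a)) (p i)))
      \<le> 1 / real n * Re (omega_trace \<omega> \<tau>s (const_seq a))"
    if "positive_el a \<and> (\<forall>k. \<tau>s k \<in> \<Delta>) \<and> i < n" for a \<tau>s i
    using that exact by (simp add: positive_el_def)
  with p show "\<exists>p. partition_of_unity \<omega> \<Delta> n p \<and>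
      (\<forall>a \<tau>s i. positive_el a \<and> (\<forall>k. \<tau>s k \<in> \<Delta>) \<and> i < n \<longrightarrow>
         Re (omega_trace \<omega> \<tau>s (smul (smul (p i) (const_seq a)) (p i)))
           \<le> 1 / real n * Re (omega_trace \<omega> \<tau>s (const_seq a)))"
    by blast
qed simp

theorem theorem4p4:
  fixes \<omega> :: "nat filter"
    and \<Delta> :: "(('a::t2_space \<Rightarrow> complex) \<Rightarrow> complex) set"
  assumes "compact (UNIV :: 'a set)"
    and "free_ultrafilter \<omega>"
    and "\<forall>\<tau>\<in>\<Delta>. tracial_state \<tau>"
    and "closed \<Delta>" and "convex_fset \<Delta>"
    and "compact (extreme_fpoints \<Delta>)"
    and "\<forall>n::nat. n \<ge> 1 \<longrightarrow> (\<exists>p. partition_of_unity \<omega> \<Delta> n p \<and>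
           (\<forall>i<n. (\<forall>\<tau>s. (\<forall>k. \<tau>s k \<in> \<Delta>) \<longrightarrow> omega_trace \<omega> \<tau>s (p i) = 1 / of_nat n)
                  \<and> ample \<omega> \<Delta> (p i)))"
  shows "(\<forall>n::nat. \<forall>p. n \<ge> 1 \<and> partition_of_unity \<omega> \<Delta> n p \<and>
           (\<forall>i<n. (\<forall>\<tau>s. (\<forall>k. \<tau>s k \<in> \<Delta>) \<longrightarrow> omega_trace \<omega> \<tau>s (p i) = 1 / of_nat n)
                  \<and> ample \<omega> \<Delta> (p i)) \<longrightarrow>
           (\<forall>a \<tau>s i. a \<in> CX \<and> (\<forall>k. \<tau>s k \<in> \<Delta>) \<and> i < n \<longrightarrow>
              omega_trace \<omega> \<tau>s (smul (smul (p i) (const_seq a)) (p i))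
                = 1 / of_nat n * omega_trace \<omega> \<tau>s (const_seq a)))
         \<and> approx_divisible \<omega> \<Delta>"
proof -
  have exact: "omega_trace \<omega> \<tau>s (smul (smul (p i) (const_seq a)) (p i))
      = 1 / of_nat n * omega_trace \<omega> \<tau>s (const_seq a)"
    if "n \<ge> 1" "partition_of_unity \<omega> \<Delta> n p"
      and hp: "\<forall>i<n. (\<forall>\<tau>s. (\<forall>k. \<tau>s k \<in> \<Delta>) \<longrightarrow> omega_trace \<omega> \<tau>s (p i) = 1 / of_nat n)
                  \<and> ample \<omega> \<Delta> (p i)"
      and "a \<in> CX" "\<forall>k. \<tau>s k \<in> \<Delta>" "i < n"
    for n p a \<tau>s i
    by (rule partition_compress_trace[OF assms(1-4,6) that(1,2) _ _ that(5,4,6)])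
      (use hp \<open>i < n\<close> in blast)+
  have "approx_divisible \<omega> \<Delta>"
  proof (rule approx_divisible_if_exact_compression)
    fix n :: nat
    assume "n \<ge> 1"
    then obtain p where "partition_of_unity \<omega> \<Delta> n p"
      and "\<forall>i<n. (\<forall>\<tau>s. (\<forall>k. \<tau>s k \<in> \<Delta>) \<longrightarrow> omega_trace \<omega> \<tau>s (p i) = 1 / of_nat n)
                  \<and> ample \<omega> \<Delta> (p i)"
      using assms(7) by blast
    with \<open>n \<ge> 1\<close> show "\<exists>p. partition_of_unity \<omega> \<Delta> n p \<and> (\<forall>a \<tau>s i. a \<in> CX \<and> (\<forall>k. \<tau>s k \<in> \<Delta>) \<and> i < n \<longrightarrow>
       omega_trace \<omega> \<tau>s (smul (smul (p i) (const_seq a)) (p i)) = 1 / of_nat n * omega_trace \<omega> \<tau>s (const_seq a))"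
      using exact by blast
  qed
  with exact show ?thesis
    by blast
qed

end
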